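(* Let $\mathcal{G}$ be an infinite prefilter on $\omega$. Then either $\mathcal{G}$ is homeomorphic to the Cantor set $2^\omega$, or $\mathcal{G}$ is homeomorphic to some filter on $\omega$.
   Context: A prefilter on $\omega$ is a collection $\mathcal{G}\subseteq\mathcal{P}(\omega)$ that is upward-closed ($x\in\mathcal{G}$, $x\subseteq y\subseteq\omega$ implies $y\in\mathcal{G}$) and closed under finite intersections. A filter on $\omega$ is a collection $\mathcal{F}\subseteq\mathcal{P}(\omega)$ that is upward-closed, closed under finite intersections, closed under finite modifications (if $x\in\mathcal{F}$ and $y\subseteq\omega$ differs from $x$ by a finite set then $y\in\mathcal{F}$), with $\varnothing\notin\mathcal{F}$ and $\omega\in\mathcal{F}$. Subsets of $\mathcal{P}(\omega)$ are identified via characteristic functions with subspaces of $2^\omega$. *)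

theory Defs
  imports "HOL-Analysis.Analysis"
begin

definition cantor_top :: "(nat \<Rightarrow> bool) topology" where
  "cantor_top = product_topology (\<lambda>_. discrete_topology (UNIV :: bool set)) UNIV"

definition char_set :: "nat set set \<Rightarrow> (nat \<Rightarrow> bool) set" where
  "char_set G = (\<lambda>x. (\<lambda>n. n \<in> x)) ` G"

definition fam_top :: "nat set set \<Rightarrow> (nat \<Rightarrow> bool) topology" where
  "fam_top G = subtopology cantor_top (char_set G)"

definition prefilter :: "nat set set \<Rightarrow> bool" where
  "prefilter G \<longleftrightarrow>
     (\<forall>x y. x \<in> G \<longrightarrow> x \<subseteq> y \<longrightarrow> y \<in> G) \<and>
     (\<forall>x y. x \<in> G \<longrightarrow> y \<in> G \<longrightarrow> x \<inter> y \<in> G)"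

definition omega_filter :: "nat set set \<Rightarrow> bool" where
  "omega_filter F \<longleftrightarrow>
     (\<forall>x y. x \<in> F \<longrightarrow> x \<subseteq> y \<longrightarrow> y \<in> F) \<and>
     (\<forall>x y. x \<in> F \<longrightarrow> y \<in> F \<longrightarrow> x \<inter> y \<in> F) \<and>
     (\<forall>x y. x \<in> F \<longrightarrow> finite ((x - y) \<union> (y - x)) \<longrightarrow> y \<in> F) \<and>
     {} \<notin> F \<and> UNIV \<in> F"

end

theory Submission
  imports Defs
begin

text \<open>Let \<open>A = \<Inter>G\<close> be the kernel of the prefilter. Every member of \<open>G\<close> contains \<open>A\<close>, so the
  coordinates in \<open>A\<close> are constantly true on \<open>G\<close> and can be dropped; since \<open>G\<close> is infinite, the
  complement \<open>-A\<close> is infinite and re-indexing it by a bijection \<open>e : \<omega> \<rightarrow> -A\<close> gives a homeomorphic copy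
  \<open>F = {y. e ` y \<union> A \<in> G}\<close> of \<open>G\<close>. If \<open>A \<in> G\<close> then \<open>F\<close> is all of \<open>\<P>(\<omega>)\<close>, i.e. the Cantor set.
  Otherwise every \<open>n \<notin> A\<close> is missed by some member of \<open>G\<close>, so \<open>-{n} \<in> G\<close>; hence \<open>G\<close>, and with it
  \<open>F\<close>, is closed under removing finite sets from \<open>-A\<close>, which makes \<open>F\<close> a filter.\<close>

lemma char_set_eq: "char_set G = {f. Collect f \<in> G}"
  unfolding char_set_def by (auto intro!: image_eqI[where x="Collect f" for f])

lemma topspace_cantor_top [simp]: "topspace cantor_top = UNIV"
  by (simp add: cantor_top_def topspace_product_topology)

lemma topspace_fam_top: "topspace (fam_top G) = {f. Collect f \<in> G}"
  by (simp add: fam_top_def char_set_eq)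

lemma fam_top_UNIV: "fam_top UNIV = cantor_top"
  by (simp add: fam_top_def char_set_eq flip: topspace_cantor_top)

lemma continuous_map_cantor_top_patch:
  "continuous_map cantor_top cantor_top (\<lambda>f n. if n \<in> A then True else f (\<sigma> n))"
proof -
  have proj: "continuous_map cantor_top (discrete_topology UNIV) (\<lambda>f. f m)" for m
    using continuous_map_product_projection[of m UNIV "\<lambda>_. discrete_topology (UNIV::bool set)"]
    by (simp add: cantor_top_def)
  have "continuous_map cantor_top (discrete_topology UNIV) (\<lambda>f. if n \<in> A then True else f (\<sigma> n))"
    for n by (cases "n \<in> A") (simp_all add: proj)
  then show ?thesis
    by (simp add: cantor_top_def continuous_map_componentwise_UNIV)
qed

lemma continuous_map_fam_top:
  assumes "continuous_map cantor_top cantor_top h" and "\<And>f. Collect f \<in> G \<Longrightarrow> Collect (h f) \<in> H"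
  shows "continuous_map (fam_top G) (fam_top H) h"
  unfolding fam_top_def
proof (rule continuous_map_into_subtopology)
  show "continuous_map (subtopology cantor_top (char_set G)) cantor_top h"
    using assms(1) by (rule continuous_map_from_subtopology)
  show "h \<in> topspace (subtopology cantor_top (char_set G)) \<rightarrow> char_set H"
    using assms(2) by (auto simp: char_set_eq)
qed

definition reindex_fam :: "(nat \<Rightarrow> nat) \<Rightarrow> nat set \<Rightarrow> nat set set \<Rightarrow> nat set set" where
  "reindex_fam e A G = {y. e ` y \<union> A \<in> G}"

lemma fam_top_homeomorphic_reindex_fam:
  assumes e: "bij_betw e UNIV (- A)" and kernel: "\<And>x. x \<in> G \<Longrightarrow> A \<subseteq> x"
  shows "fam_top G homeomorphic_space fam_top (reindex_fam e A G)"
proof -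
  have inj: "inj e" and range_e: "range e = - A"
    using e by (auto simp: bij_betw_def)
  have e_inv: "m \<notin> A \<Longrightarrow> e (inv e m) = m" for m
    using range_e by (simp add: f_inv_into_f)
  define \<Phi> where "\<Phi> = (\<lambda>f::nat \<Rightarrow> bool. f \<circ> e)"
  define \<Psi> where "\<Psi> = (\<lambda>(g::nat \<Rightarrow> bool) m. if m \<in> A then True else g (inv e m))"
  have Psi_Phi: "\<Psi> (\<Phi> f) = f" if "A \<subseteq> Collect f" for f
    using that e_inv unfolding \<Psi>_def \<Phi>_def by (force simp: fun_eq_iff)
  have Phi_Psi: "\<Phi> (\<Psi> g) = g" for g
    using inj range_e unfolding \<Phi>_def \<Psi>_def by (auto simp: inv_f_f fun_eq_iff)
  have image_Psi: "Collect (\<Psi> g) = e ` Collect g \<union> A" for g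
  proof -
    have "m \<in> e ` Collect g \<longleftrightarrow> g (inv e m)" if "m \<notin> A" for m
      using inj_image_mem_iff[OF inj, of "inv e m" "Collect g"] e_inv[OF that] by simp
    then show ?thesis using range_e by (auto simp: \<Psi>_def)
  qed
  show ?thesis
    unfolding homeomorphic_space_def homeomorphic_maps_def
  proof (intro exI conjI ballI)
    show "continuous_map (fam_top G) (fam_top (reindex_fam e A G)) \<Phi>"
    proof (rule continuous_map_fam_top)
      show "continuous_map cantor_top cantor_top \<Phi>"
        using continuous_map_cantor_top_patch[of "{}" e] by (simp add: \<Phi>_def o_def)
      fix f assume f: "Collect f \<in> G"
      then have "e ` Collect (\<Phi> f) \<union> A = Collect f"
        using kernel Psi_Phi image_Psi by metis
      with f show "Collect (\<Phi> f) \<in> reindex_fam e A G"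
        by (simp add: reindex_fam_def)
    qed
    show "continuous_map (fam_top (reindex_fam e A G)) (fam_top G) \<Psi>"
    proof (rule continuous_map_fam_top)
      show "continuous_map cantor_top cantor_top \<Psi>"
        unfolding \<Psi>_def by (rule continuous_map_cantor_top_patch)
    qed (simp add: image_Psi reindex_fam_def)
  qed (simp_all add: topspace_fam_top Phi_Psi Psi_Phi kernel)
qed

lemma prefilter_upward: "prefilter G \<Longrightarrow> x \<in> G \<Longrightarrow> x \<subseteq> y \<Longrightarrow> y \<in> G"
  and prefilter_Int: "prefilter G \<Longrightarrow> x \<in> G \<Longrightarrow> y \<in> G \<Longrightarrow> x \<inter> y \<in> G"
  unfolding prefilter_def by blast+

lemma prefilter_Diff_finite:
  assumes G: "prefilter G" and "finite D" and "D \<inter> \<Inter>G = {}" and "x \<in> G"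
  shows "x - D \<in> G"
  using assms(2-)
proof (induction D rule: finite_induct)
  case (insert d D)
  have "d \<notin> \<Inter>G" using insert.prems(1) by blast
  then obtain z where "z \<in> G" and "z \<subseteq> - {d}" by blast
  then have "- {d} \<in> G" by (rule prefilter_upward[OF G])
  moreover have "x - D \<in> G" using insert.IH insert.prems by blast
  ultimately have "(x - D) \<inter> - {d} \<in> G" using prefilter_Int[OF G] by blast
  moreover have "(x - D) \<inter> - {d} = x - insert d D" by blast
  ultimately show ?case by simp
qed simp

lemma infinite_imp_infinite_Compl_Inter:
  assumes "infinite G"
  shows "infinite (- \<Inter>G)"
proof
  assume "finite (- \<Inter>G)"
  moreover have "G \<subseteq> (\<lambda>y. \<Inter>G \<union> y) ` Pow (- \<Inter>G)"
    by (auto intro!: image_eqI[where x="x - \<Inter>G" for x])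
  ultimately show False using assms finite_subset by blast
qed

lemma omega_filter_reindex_fam:
  assumes G: "prefilter G" and "G \<noteq> {}" and "\<Inter>G \<notin> G"
    and e: "bij_betw e UNIV (- \<Inter>G)"
  shows "omega_filter (reindex_fam e (\<Inter>G) G)"
  unfolding omega_filter_def
proof (intro conjI allI impI)
  let ?A = "\<Inter>G" and ?F = "reindex_fam e (\<Inter>G) G"
  have inj: "inj e" and range_e: "range e = - ?A"
    using e by (auto simp: bij_betw_def)
  have mem_F: "y \<in> ?F" if "z \<in> G" and "z \<subseteq> e ` y \<union> ?A" for y z
    using prefilter_upward[OF G that] by (simp add: reindex_fam_def)
  fix x y
  show "y \<in> ?F" if "x \<in> ?F" and "x \<subseteq> y"
    using that by (intro mem_F[of "e ` x \<union> ?A"]) (auto simp: reindex_fam_def)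
  show "x \<inter> y \<in> ?F" if "x \<in> ?F" and "y \<in> ?F"
  proof (rule mem_F)
    show "(e ` x \<union> ?A) \<inter> (e ` y \<union> ?A) \<in> G"
      using that prefilter_Int[OF G] by (simp add: reindex_fam_def)
    show "(e ` x \<union> ?A) \<inter> (e ` y \<union> ?A) \<subseteq> e ` (x \<inter> y) \<union> ?A"
      using image_Int[OF inj, of x y] by blast
  qed
  show "y \<in> ?F" if x: "x \<in> ?F" and "finite (x - y \<union> (y - x))"
  proof (rule mem_F)
    have "finite (e ` (x - y))" and "e ` (x - y) \<inter> ?A = {}"
      using that(2) range_e by auto
    then show "(e ` x \<union> ?A) - e ` (x - y) \<in> G"
      using x by (intro prefilter_Diff_finite[OF G]) (simp_all add: reindex_fam_def)
    show "(e ` x \<union> ?A) - e ` (x - y) \<subseteq> e ` y \<union> ?A" by blast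
  qed
next
  show "{} \<notin> reindex_fam e (\<Inter>G) G"
    using assms(3) by (simp add: reindex_fam_def)
  obtain z where "z \<in> G" using assms(2) by blast
  then have "UNIV \<in> G" using prefilter_upward[OF G] by blast
  moreover have "range e \<union> \<Inter>G = UNIV" using e by (auto simp: bij_betw_def)
  ultimately show "UNIV \<in> reindex_fam e (\<Inter>G) G" by (simp add: reindex_fam_def)
qed

theorem mainTheorem2:
  fixes G :: "nat set set"
  assumes "prefilter G" and "infinite G"
  shows "fam_top G homeomorphic_space cantor_top \<or>
         (\<exists>F. omega_filter F \<and> fam_top G homeomorphic_space fam_top F)"
proof -
  let ?A = "\<Inter>G"
  define e where "e = enumerate (- ?A)"
  have e: "bij_betw e UNIV (- ?A)"
    using infinite_imp_infinite_Compl_Inter[OF assms(2)]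
    by (simp add: e_def bij_enumerate)
  have hom: "fam_top G homeomorphic_space fam_top (reindex_fam e ?A G)"
    using fam_top_homeomorphic_reindex_fam[OF e Inter_lower] .
  show ?thesis
  proof (cases "?A \<in> G")
    case True
    then have "reindex_fam e ?A G = UNIV"
      unfolding reindex_fam_def using prefilter_upward[OF assms(1) True] by blast
    with hom show ?thesis by (simp add: fam_top_UNIV)
  next
    case False
    have "G \<noteq> {}" using assms(2) by auto
    with False have "omega_filter (reindex_fam e ?A G)"
      using omega_filter_reindex_fam[OF assms(1) _ _ e] by simp
    with hom show ?thesis by blast
  qed
qed

end
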